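(* Let $(A,C,k)$ be an instance and $W$ an affordable committee. Let $\overline{W}$ be obtained from $W$ by completion with the maximin support rule. Then $\mathrm{supp}(\overline{W})\ge\frac12\max\{\mathrm{supp}(W'):W'\subseteq C,|W'|=k\}$.
   Context: An instance $(A,C,k)$ consists of a finite nonempty candidate set $C$, voters $N=\{1,\dots,n\}$, approval sets $A_i\subseteq C$, and a committee size $1\le k\le|C|$. A committee is $W\subseteq C$ with $|W|\le k$. For a nonempty committee $W$, its maximin support is $\mathrm{supp}(W)=\min_{\emptyset\ne S\subseteq W}\frac{1}{|S|}|\{i\in N: A_i\cap S\ne\emptyset\}|$. Completion with the maximin support rule repeatedly adds to the current committee $W$ a candidate $c\notin W$ maximizing $\mathrm{supp}(W\cup\{c\})$ (ties arbitrary) until the committee has size $k$. $W$ is affordable if there are $p_i:C\to\mathbb{R}_{\ge0}$ ($i\in N$) with $p_i(c)=0$ for $c\notin A_i$, $\sum_c p_i(c)\le k/n$, $\sum_i p_i(c)=1$ for $c\in W$, $\sum_i p_i(c)=0$ for $c\notin W$. *)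

theory Defs
  imports Complex_Main
begin

definition abc_instance :: "(nat \<Rightarrow> 'c set) \<Rightarrow> 'c set \<Rightarrow> nat \<Rightarrow> nat \<Rightarrow> bool" where
  "abc_instance A C n k \<longleftrightarrow> finite C \<and> C \<noteq> {} \<and> 0 < n \<and> (\<forall>i\<in>{1..n}. A i \<subseteq> C)
     \<and> 1 \<le> k \<and> k \<le> card C"

definition committee :: "'c set \<Rightarrow> nat \<Rightarrow> 'c set \<Rightarrow> bool" where
  "committee C k W \<longleftrightarrow> W \<subseteq> C \<and> card W \<le> k"

definition approvers :: "(nat \<Rightarrow> 'c set) \<Rightarrow> nat \<Rightarrow> 'c set \<Rightarrow> nat" where
  "approvers A n S = card {i \<in> {1..n}. A i \<inter> S \<noteq> {}}"

definition supp :: "(nat \<Rightarrow> 'c set) \<Rightarrow> nat \<Rightarrow> 'c set \<Rightarrow> real" where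
  "supp A n W = Min ((\<lambda>S. real (approvers A n S) / real (card S)) ` {S. S \<subseteq> W \<and> S \<noteq> {}})"

definition affordable :: "(nat \<Rightarrow> 'c set) \<Rightarrow> 'c set \<Rightarrow> nat \<Rightarrow> nat \<Rightarrow> 'c set \<Rightarrow> bool" where
  "affordable A C n k W \<longleftrightarrow> committee C k W \<and>
     (\<exists>p :: nat \<Rightarrow> 'c \<Rightarrow> real.
        (\<forall>i\<in>{1..n}. \<forall>c\<in>C. p i c \<ge> 0) \<and>
        (\<forall>i\<in>{1..n}. \<forall>c\<in>C. c \<notin> A i \<longrightarrow> p i c = 0) \<and>
        (\<forall>i\<in>{1..n}. (\<Sum>c\<in>C. p i c) \<le> real k / real n) \<and>
        (\<forall>c\<in>W. (\<Sum>i\<in>{1..n}. p i c) = 1) \<and>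
        (\<forall>c\<in>C - W. (\<Sum>i\<in>{1..n}. p i c) = 0))"

text \<open>mm_completion A C n k W Wbar: Wbar is a possible outcome (for some tie-breaking)
  of completing W with the maximin support rule.\<close>
inductive mm_completion :: "(nat \<Rightarrow> 'c set) \<Rightarrow> 'c set \<Rightarrow> nat \<Rightarrow> nat \<Rightarrow> 'c set \<Rightarrow> 'c set \<Rightarrow> bool"
  for A C n k where
  mm_done: "card W \<ge> k \<Longrightarrow> mm_completion A C n k W W"
| mm_step: "card W < k \<Longrightarrow> c \<in> C - W \<Longrightarrow>
         (\<forall>d\<in>C - W. supp A n (insert d W) \<le> supp A n (insert c W)) \<Longrightarrow>
         mm_completion A C n k (insert c W) Wbar \<Longrightarrow> mm_completion A C n k W Wbar"

end

theory Submission
  imports Defs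
begin

text \<open>Call a committee \<open>s\<close>-supported if each of its subsets \<open>S\<close> is approved by at least
  \<open>s |S|\<close> voters, i.e. if its maximin support is at least \<open>s\<close>. Let \<open>W\<^sup>*\<close> be an optimal committee of
  size \<open>k\<close> with support \<open>t \<le> n/k\<close>. An affordable committee is \<open>n/k\<close>-supported, hence
  \<open>t/2\<close>-supported, and completion keeps the committee \<open>V\<close> \<open>t/2\<close>-supported: since \<open>|V| < |W\<^sup>*|\<close>,
  some \<open>d \<in> W\<^sup>* - V\<close> keeps \<open>V + d\<close> \<open>t/2\<close>-supported, and the maximin rule adds a candidate at
  least as good as \<open>d\<close>. Were there no such \<open>d\<close>, pick for each \<open>d \<in> W\<^sup>* - V\<close> a violating set
  \<open>X\<^sub>d \<subseteq> V + d\<close>. Since the excess \<open>|N(S)| - (t/2)|S|\<close> is submodular and nonnegative on subsets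
  of \<open>V\<close>, the union \<open>Y\<close> of the \<open>X\<^sub>d\<close> violates as well; but \<open>|Y| \<le> 2 |Y \<inter> W\<^sup>*|\<close>, and
  \<open>Y \<inter> W\<^sup>*\<close> alone has at least \<open>t |Y \<inter> W\<^sup>*|\<close> approvers.\<close>

definition excess :: "(nat \<Rightarrow> 'c set) \<Rightarrow> nat \<Rightarrow> real \<Rightarrow> 'c set \<Rightarrow> real" where
  "excess A n s S = real (approvers A n S) - s * real (card S)"

definition supported :: "(nat \<Rightarrow> 'c set) \<Rightarrow> nat \<Rightarrow> real \<Rightarrow> 'c set \<Rightarrow> bool" where
  "supported A n s W \<longleftrightarrow> (\<forall>S\<subseteq>W. 0 \<le> excess A n s S)"

lemma approvers_mono: "X \<subseteq> Y \<Longrightarrow> approvers A n X \<le> approvers A n Y"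
  unfolding approvers_def by (rule card_mono) auto

lemma approvers_le_voters: "approvers A n X \<le> n"
proof -
  have "approvers A n X \<le> card {1..n}"
    unfolding approvers_def by (rule card_mono) auto
  then show ?thesis by simp
qed

lemma approvers_Un_Int_le:
  "approvers A n (X \<union> Y) + approvers A n (X \<inter> Y) \<le> approvers A n X + approvers A n Y"
proof -
  let ?N = "\<lambda>X. {i \<in> {1..n}. A i \<inter> X \<noteq> {}}"
  have N_Un: "?N (X \<union> Y) = ?N X \<union> ?N Y" by auto
  have "card (?N (X \<inter> Y)) \<le> card (?N X \<inter> ?N Y)"
    by (rule card_mono) auto
  moreover have "card (?N X \<union> ?N Y) + card (?N X \<inter> ?N Y) = card (?N X) + card (?N Y)"
    by (rule card_Un_Int[symmetric]) auto
  ultimately show ?thesis unfolding approvers_def N_Un by linarith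
qed

lemma excess_empty [simp]: "excess A n s {} = 0"
  by (simp add: excess_def approvers_def)

lemma excess_submodular:
  assumes "finite X" "finite Y"
  shows "excess A n s (X \<union> Y) + excess A n s (X \<inter> Y) \<le> excess A n s X + excess A n s Y"
proof -
  have "real (card (X \<union> Y)) + real (card (X \<inter> Y)) = real (card X) + real (card Y)"
    using card_Un_Int[OF assms] by simp
  then have "s * real (card (X \<union> Y)) + s * real (card (X \<inter> Y))
      = s * real (card X) + s * real (card Y)"
    by (metis distrib_left)
  moreover have "real (approvers A n (X \<union> Y)) + real (approvers A n (X \<inter> Y))
      \<le> real (approvers A n X) + real (approvers A n Y)"
    using approvers_Un_Int_le by (metis of_nat_add of_nat_mono)
  ultimately show ?thesis unfolding excess_def by linarith
qed

lemma supported_antimono: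
  assumes "s \<le> s'" "supported A n s' W"
  shows "supported A n s W"
proof -
  have "excess A n s' S \<le> excess A n s S" for S
    using assms(1) unfolding excess_def by (simp add: mult_right_mono)
  then show ?thesis using assms(2) unfolding supported_def by (meson order_trans)
qed

lemma supported_iff_le_supp:
  assumes "finite W" "W \<noteq> {}"
  shows "supported A n s W \<longleftrightarrow> s \<le> supp A n W"
proof -
  let ?P = "{S. S \<subseteq> W \<and> S \<noteq> {}}"
  have pointwise: "0 \<le> excess A n s S \<longleftrightarrow> s \<le> real (approvers A n S) / real (card S)"
    if "S \<in> ?P" for S
  proof -
    have "0 < real (card S)"
      using that assms(1) by (auto simp: card_gt_0_iff intro: finite_subset)
    then show ?thesis unfolding excess_def by (simp add: pos_le_divide_eq)
  qed
  have "supported A n s W \<longleftrightarrow> (\<forall>S\<in>?P. 0 \<le> excess A n s S)"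
    unfolding supported_def by (metis (mono_tags, lifting) excess_empty mem_Collect_eq order_refl)
  also have "\<dots> \<longleftrightarrow> (\<forall>S\<in>?P. s \<le> real (approvers A n S) / real (card S))"
    using pointwise by blast
  also have "\<dots> \<longleftrightarrow> s \<le> supp A n W"
  proof -
    have "finite ?P" "?P \<noteq> {}" using assms by auto
    then show ?thesis unfolding supp_def by (simp add: Min_ge_iff)
  qed
  finally show ?thesis .
qed

lemma supp_nonneg:
  assumes "finite W" "W \<noteq> {}"
  shows "0 \<le> supp A n W"
proof -
  have "supported A n 0 W" unfolding supported_def excess_def by simp
  then show ?thesis using supported_iff_le_supp[OF assms] by blast
qed

lemma supp_le_voters_per_seat:
  assumes "finite W" "W \<noteq> {}"
  shows "supp A n W \<le> real n / real (card W)"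
proof -
  have "supported A n (supp A n W) W"
    using supported_iff_le_supp[OF assms] by blast
  then have "0 \<le> excess A n (supp A n W) W"
    unfolding supported_def by blast
  then have "supp A n W * real (card W) \<le> real n"
    using approvers_le_voters[of A n W] unfolding excess_def by linarith
  moreover have "0 < real (card W)" using assms by (simp add: card_gt_0_iff)
  ultimately show ?thesis by (simp add: pos_le_divide_eq)
qed

lemma affordable_card_le_approvers:
  assumes "finite C" "affordable A C n k W" "S \<subseteq> W"
  shows "real (card S) \<le> real k / real n * real (approvers A n S)"
proof -
  from assms(2) obtain p :: "nat \<Rightarrow> 'a \<Rightarrow> real" where
    p_nonneg: "\<forall>i\<in>{1..n}. \<forall>c\<in>C. p i c \<ge> 0" and
    p_approved: "\<forall>i\<in>{1..n}. \<forall>c\<in>C. c \<notin> A i \<longrightarrow> p i c = 0" and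
    p_budget: "\<forall>i\<in>{1..n}. (\<Sum>c\<in>C. p i c) \<le> real k / real n" and
    p_price: "\<forall>c\<in>W. (\<Sum>i\<in>{1..n}. p i c) = 1"
    unfolding affordable_def by blast
  have SC: "S \<subseteq> C" using assms(2,3) unfolding affordable_def committee_def by blast
  have payment_le: "(\<Sum>c\<in>S. p i c) \<le> (if A i \<inter> S \<noteq> {} then real k / real n else 0)"
    if i: "i \<in> {1..n}" for i
  proof (cases "A i \<inter> S \<noteq> {}")
    case True
    have "(\<Sum>c\<in>S. p i c) \<le> (\<Sum>c\<in>C. p i c)"
      by (rule sum_mono2[OF assms(1) SC]) (use p_nonneg i in auto)
    also have "\<dots> \<le> real k / real n" using p_budget i by blast
    finally show ?thesis using True by simp
  next
    case False
    then have "(\<Sum>c\<in>S. p i c) = 0" using SC p_approved i by (intro sum.neutral) blast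
    then show ?thesis using False by simp
  qed
  have "real (card S) = (\<Sum>c\<in>S. \<Sum>i\<in>{1..n}. p i c)"
    using p_price assms(3) by (simp add: subset_iff)
  also have "\<dots> = (\<Sum>i\<in>{1..n}. \<Sum>c\<in>S. p i c)" by (rule sum.swap)
  also have "\<dots> \<le> (\<Sum>i\<in>{1..n}. if A i \<inter> S \<noteq> {} then real k / real n else 0)"
    by (rule sum_mono) (rule payment_le)
  also have "\<dots> = real k / real n * real (approvers A n S)"
    unfolding approvers_def by (simp add: sum.If_cases Int_def)
  finally show ?thesis .
qed

lemma affordable_supported:
  assumes "finite C" "affordable A C n k W"
  shows "supported A n (real n / real k) W"
  unfolding supported_def excess_def
proof (intro allI impI)
  fix S assume "S \<subseteq> W"
  then have "real n / real k * real (card S)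
      \<le> real n / real k * (real k / real n * real (approvers A n S))"
    using affordable_card_le_approvers[OF assms] by (intro mult_left_mono) auto
  also have "\<dots> \<le> real (approvers A n S)"
    by (cases "n = 0 \<or> k = 0") (auto simp: field_simps)
  finally show "0 \<le> real (approvers A n S) - real n / real k * real (card S)" by simp
qed

lemma excess_UN_negative:
  assumes "finite E" "E \<noteq> {}" "finite B" "supported A n s B"
    and "\<And>d. d \<in> E \<Longrightarrow> d \<notin> B \<and> X d \<subseteq> insert d B \<and> excess A n s (X d) < 0"
  shows "excess A n s (\<Union>d\<in>E. X d) < 0"
  using assms(1,2,5)
proof (induction E rule: finite_ne_induct)
  case (singleton d)
  then show ?case by simp
next
  case (insert d E)
  let ?U = "\<Union>e\<in>E. X e"
  have Xd: "d \<notin> B" "X d \<subseteq> insert d B" "excess A n s (X d) < 0"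
    using insert.prems by auto
  have "?U \<subseteq> B \<union> E" using insert.prems by blast
  then have "X d \<inter> ?U \<subseteq> B" using Xd(2) \<open>d \<notin> E\<close> by blast
  then have "0 \<le> excess A n s (X d \<inter> ?U)"
    using assms(4) unfolding supported_def by blast
  moreover have "finite (X d)" "finite ?U"
    using insert.prems insert.hyps(1) assms(3) by (auto intro: finite_subset)
  moreover have "excess A n s ?U < 0" using insert.IH insert.prems by simp
  ultimately show ?case
    using excess_submodular[of "X d" ?U A n s] Xd(3) by (simp del: UN_simps)
qed

lemma card_le_double_card_Int:
  assumes "finite B" "finite W" "card B \<le> card W" "Y \<subseteq> B \<union> W" "W - B \<subseteq> Y"
  shows "card Y \<le> 2 * card (Y \<inter> W)"
proof -
  have "finite Y" using assms(1,2,4) finite_subset by blast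
  have "card (Y - W) \<le> card (B - W)"
    using assms(1,4) by (intro card_mono) auto
  also have "\<dots> \<le> card (W - B)"
    using assms(1-3) by (simp add: card_Diff_subset_Int Int_commute)
  also have "\<dots> \<le> card (Y \<inter> W)"
    using \<open>finite Y\<close> assms(5) by (intro card_mono) auto
  finally show ?thesis
    using card_Int_Diff[OF \<open>finite Y\<close>, of W] by linarith
qed

lemma supported_insert_exists:
  assumes "finite B" "finite W" "card B < card W" "0 \<le> s"
    and "supported A n s B" "supported A n (2 * s) W"
  shows "\<exists>d\<in>W - B. supported A n s (insert d B)"
proof (rule ccontr)
  define D where "D = W - B"
  assume "\<not> ?thesis"
  then have "\<exists>X. X \<subseteq> insert d B \<and> excess A n s X < 0" if "d \<in> D" for d
    using that unfolding supported_def D_def by (force simp: not_le)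
  then obtain X where X: "\<And>d. d \<in> D \<Longrightarrow> X d \<subseteq> insert d B \<and> excess A n s (X d) < 0"
    by metis
  have D_in_X: "d \<in> X d" if "d \<in> D" for d
  proof (rule ccontr)
    assume "d \<notin> X d"
    then have "X d \<subseteq> B" using X[OF that] by blast
    then have "0 \<le> excess A n s (X d)" using assms(5) unfolding supported_def by blast
    then show False using X[OF that] by simp
  qed
  have "D \<noteq> {}"
  proof
    assume "D = {}"
    then have "card W \<le> card B" using assms(1) unfolding D_def by (intro card_mono) auto
    then show False using assms(3) by simp
  qed
  define Y where "Y = (\<Union>d\<in>D. X d)"
  have "excess A n s Y < 0"
    unfolding Y_def using \<open>D \<noteq> {}\<close> assms(1,2,5) X
    by (intro excess_UN_negative) (auto simp: D_def)
  have "Y \<subseteq> B \<union> W" "W - B \<subseteq> Y"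
    using X D_in_X unfolding Y_def D_def by auto
  then have "card Y \<le> 2 * card (Y \<inter> W)"
    using assms(1-3) by (intro card_le_double_card_Int) auto
  then have "real (card Y) \<le> 2 * real (card (Y \<inter> W))" by linarith
  then have "s * real (card Y) \<le> s * (2 * real (card (Y \<inter> W)))"
    using assms(4) by (rule mult_left_mono)
  also have "\<dots> \<le> real (approvers A n (Y \<inter> W))"
  proof -
    have "0 \<le> excess A n (2 * s) (Y \<inter> W)" using assms(6) unfolding supported_def by blast
    then show ?thesis unfolding excess_def by simp
  qed
  also have "\<dots> \<le> real (approvers A n Y)"
    by (simp add: approvers_mono)
  finally show False
    using \<open>excess A n s Y < 0\<close> unfolding excess_def by simp
qed

lemma mm_completion_card: "mm_completion A C n k W Wbar \<Longrightarrow> k \<le> card Wbar"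
  by (induction rule: mm_completion.induct) auto

lemma mm_completion_preserves_supported:
  assumes "mm_completion A C n k V Vbar" "finite C" "V \<subseteq> C" "supported A n s V"
    and "W \<subseteq> C" "card W = k" "supported A n (2 * s) W" "0 \<le> s"
  shows "supported A n s Vbar"
  using assms(1,3,4)
proof (induction rule: mm_completion.induct)
  case (mm_done V)
  then show ?case by blast
next
  case (mm_step V c Vbar)
  have "finite V" "finite W" using mm_step.prems(1) assms(2,5) finite_subset by auto
  then obtain d where "d \<in> W - V" "supported A n s (insert d V)"
    using supported_insert_exists[of V W s A n] mm_step.hyps(1) mm_step.prems(2) assms(6-8)
    by auto
  then have "s \<le> supp A n (insert d V)"
    using supported_iff_le_supp \<open>finite V\<close> by blast
  also have "\<dots> \<le> supp A n (insert c V)"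
    using mm_step.hyps(3) \<open>d \<in> W - V\<close> assms(5) by blast
  finally have "supported A n s (insert c V)"
    using supported_iff_le_supp \<open>finite V\<close> by blast
  then show ?case
    using mm_step.IH mm_step.hyps(2) mm_step.prems(1) by blast
qed

theorem mm_completion_supp_ge_half:
  assumes inst: "abc_instance A C n k" and aff: "affordable A C n k W"
    and completion: "mm_completion A C n k W Wbar"
    and "W' \<subseteq> C" "card W' = k"
  shows "supp A n W' \<le> 2 * supp A n Wbar"
proof -
  have "finite C" "1 \<le> k" using inst unfolding abc_instance_def by auto
  then have W': "finite W'" "W' \<noteq> {}"
    using assms(4,5) finite_subset by fastforce+
  define s where "s = supp A n W' / 2"
  have "0 \<le> s" using supp_nonneg[OF W'] unfolding s_def by simp
  have "supported A n (2 * s) W'"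
    using supported_iff_le_supp[OF W'] unfolding s_def by simp
  have "supp A n W' \<le> real n / real k"
    using supp_le_voters_per_seat[OF W', of A n] assms(5) by simp
  then have "s \<le> real n / real k"
    using supp_nonneg[OF W', of A n] unfolding s_def by linarith
  then have "supported A n s W"
    using supported_antimono affordable_supported[OF \<open>finite C\<close> aff] by blast
  moreover have "W \<subseteq> C" using aff unfolding affordable_def committee_def by blast
  ultimately have "supported A n s Wbar"
    using mm_completion_preserves_supported[OF completion \<open>finite C\<close>] assms(4,5)
      \<open>supported A n (2 * s) W'\<close> \<open>0 \<le> s\<close> by blast
  moreover have "finite Wbar" "Wbar \<noteq> {}"
    using mm_completion_card[OF completion] \<open>1 \<le> k\<close> card_gt_0_iff by fastforce+
  ultimately show ?thesis
    using supported_iff_le_supp unfolding s_def by fastforce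
qed

theorem theorem8:
  fixes A :: "nat \<Rightarrow> 'c set" and C :: "'c set" and n k :: nat and W Wbar :: "'c set"
  assumes "abc_instance A C n k"
    and "affordable A C n k W"
    and "mm_completion A C n k W Wbar"
  shows "supp A n Wbar \<ge> 1/2 * Max ((\<lambda>W'. supp A n W') ` {W'. W' \<subseteq> C \<and> card W' = k})"
proof -
  have "finite C" "k \<le> card C" using assms(1) unfolding abc_instance_def by auto
  then have "finite {W'. W' \<subseteq> C \<and> card W' = k}" "{W'. W' \<subseteq> C \<and> card W' = k} \<noteq> {}"
    using obtain_subset_with_card_n[of k C] by auto
  moreover have "\<forall>W'\<in>{W'. W' \<subseteq> C \<and> card W' = k}. supp A n W' \<le> 2 * supp A n Wbar"
    using mm_completion_supp_ge_half[OF assms] by blast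
  ultimately have "Max ((\<lambda>W'. supp A n W') ` {W'. W' \<subseteq> C \<and> card W' = k}) \<le> 2 * supp A n Wbar"
    by simp
  then show ?thesis by linarith
qed

end
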